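(* Consider Algorithm FoBa-gdt with parameter $\epsilon$. Let $s$ be a positive integer such that $$(s-\bar k)>(\bar k+1)\left[\left(\sqrt{\frac{\rho_+(s)}{\rho_-(s)}}+1\right)\frac{2\rho_+(1)}{\rho_-(s)}\right]^2,$$ and take $\epsilon>\frac{2\sqrt2\,\rho_+(1)}{\rho_-(s)}\|\nabla Q(\bar\beta)\|_\infty$. Then the algorithm terminates at some $k\le s-\bar k$.
   Context: Let $Q:\mathbb{R}^d\to\mathbb{R}$ be convex and continuously differentiable. $e_j$ is the $j$-th standard basis vector, $\mathrm{supp}(\beta)=\{j:\beta_j\ne0\}$, $\|\beta\|_0=|\mathrm{supp}(\beta)|$, $\|\cdot\|$ is the Euclidean norm, $A-B$ is set difference, and $v_S$ is $v$ restricted to the coordinates in $S$. For $F\subseteq\{1,\dots,d\}$, $\hat\beta(F)$ denotes a minimizer of $Q$ over $\{\beta:\mathrm{supp}(\beta)\subseteq F\}$ (assumed to exist). For a positive integer $s$, the restricted strong convexity constants $\rho_-(s),\rho_+(s)>0$ are constants such that for all $\beta,\beta'\in\mathbb{R}^d$ with $\|\beta'-\beta\|_0\le s$: $\frac{\rho_-(s)}{2}\|\beta'-\beta\|^2\le Q(\beta')-Q(\beta)-\langle\nabla Q(\beta),\beta'-\beta\rangle\le\frac{\rho_+(s)}{2}\|\beta'-\beta\|^2.$ $\bar\beta$ is a solution of $\min_\beta Q(\beta)$ subject to $\|\beta\|_0\le\bar k$, $\bar F=\mathrm{supp}(\bar\beta)$ and $\bar k=|\bar F|$. Algorithm FoBa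 has two variants: FoBa-obj (parameter $\delta>0$) and FoBa-gdt (parameter $\epsilon>0$). Initialize $F^{(0)}=\emptyset$, $\beta^{(0)}=0$, $k=0$, and repeat the following iteration. (1) Stopping test: FoBa-obj stops if $Q(\beta^{(k)})-\min_{\alpha\in\mathbb{R},\,j\notin F^{(k)}}Q(\beta^{(k)}+\alpha e_j)<\delta$; FoBa-gdt stops if $\|\nabla Q(\beta^{(k)})\|_\infty<\epsilon$. On stopping the output is $\beta^{(k)}$ with support $F^{(k)}$, and the algorithm is said to terminate at $k$. (2) Forward step: FoBa-obj picks $i^{(k)}\in\arg\min_{i\notin F^{(k)}}\min_\alpha Q(\beta^{(k)}+\alpha e_i)$; FoBa-gdt picks $i^{(k)}\in\arg\max_{i\notin F^{(k)}}|\nabla Q(\beta^{(k)})_i|$. Set $F^{(k+1)}=F^{(k)}\cup\{i^{(k)}\}$, $\beta^{(k+1)}=\hat\beta(F^{(k+1)})$, $\delta^{(k+1)}=Q(\beta^{(k)})-Q(\beta^{(k+1)})$, $k\leftarrow k+1$. (3) Backward step: repeat — if $F^{(k)}=\emptyset$ or $\min_{i\in F^{(k)}}Q(\beta^{(k)}-\beta^{(k)}_ie_i)-Q(\beta^{(k)})\ge\delta^{(k)}/2$, leave the backward step; otherwise pick $j\in\arg\min_{i\in F^{(k)}}Q(\beta^{(k)}-\beta^{(k)}_ie_i)$, set $F^{(k-1)}=F^{(k)}-\{j\}$, $\beta^{(k-1)}=\hat\beta(F^{(k-1)})$, $k\leftarrow k-1$ (where $\delta^{(k-1)}$ is the value recorded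 at the most recent forward step producing index $k-1$). Thus $|F^{(k)}|=k$ always. "At the beginning of an iteration" means the state just before a stopping test. *)

theory Defs
  imports "HOL-Analysis.Analysis"
begin

definition supp :: "real^'n \<Rightarrow> 'n set" where
  "supp \<beta> = {j. \<beta> $ j \<noteq> 0}"

definition norm0 :: "real^'n \<Rightarrow> nat" where
  "norm0 \<beta> = card (supp \<beta>)"

definition linf :: "real^'n \<Rightarrow> real" where
  "linf v = Max (range (\<lambda>j. \<bar>v $ j\<bar>))"

text \<open>beta is a minimizer of Q over vectors supported in F (a possible value of hat-beta(F)).\<close>
definition is_restr_min :: "(real^'n \<Rightarrow> real) \<Rightarrow> 'n set \<Rightarrow> real^'n \<Rightarrow> bool" where
  "is_restr_min Q F \<beta> \<longleftrightarrow> supp \<beta> \<subseteq> F \<and> (\<forall>\<beta>'. supp \<beta>' \<subseteq> F \<longrightarrow> Q \<beta> \<le> Q \<beta>')"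

text \<open>Restricted strong convexity / smoothness constants at sparsity level s; G is the gradient of Q.\<close>
definition rsc :: "(real^'n \<Rightarrow> real) \<Rightarrow> (real^'n \<Rightarrow> real^'n) \<Rightarrow> (nat \<Rightarrow> real) \<Rightarrow> (nat \<Rightarrow> real) \<Rightarrow> nat \<Rightarrow> bool" where
  "rsc Q G \<rho>m \<rho>p s \<longleftrightarrow> \<rho>m s > 0 \<and> \<rho>p s > 0 \<and>
     (\<forall>\<beta> \<beta>'. norm0 (\<beta>' - \<beta>) \<le> s \<longrightarrow>
        \<rho>m s / 2 * (norm (\<beta>' - \<beta>))\<^sup>2 \<le> Q \<beta>' - Q \<beta> - G \<beta> \<bullet> (\<beta>' - \<beta>) \<and>
        Q \<beta>' - Q \<beta> - G \<beta> \<bullet> (\<beta>' - \<beta>) \<le> \<rho>p s / 2 * (norm (\<beta>' - \<beta>))\<^sup>2)"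

text \<open>The current index k is card F;
  delta i is the value delta^(i) recorded at the most recent forward step producing index i.
  Phase Test = at the beginning of an iteration (just before the stopping test);
  phase Back = inside the backward loop.\<close>
datatype phase = Test | Back

type_synonym 'n foba_conf = "phase \<times> 'n set \<times> (real^'n) \<times> (nat \<Rightarrow> real)"

inductive foba_gdt_step :: "(real^'n \<Rightarrow> real) \<Rightarrow> (real^'n \<Rightarrow> real^'n) \<Rightarrow> real
    \<Rightarrow> 'n foba_conf \<Rightarrow> 'n foba_conf \<Rightarrow> bool"
  for Q G \<epsilon> where
  forward:
    "\<lbrakk> \<not> linf (G \<beta>) < \<epsilon>; i \<notin> F; \<forall>i'. i' \<notin> F \<longrightarrow> \<bar>G \<beta> $ i'\<bar> \<le> \<bar>G \<beta> $ i\<bar>;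
       is_restr_min Q (insert i F) \<beta>' \<rbrakk>
     \<Longrightarrow> foba_gdt_step Q G \<epsilon> (Test, F, \<beta>, \<delta>)
           (Back, insert i F, \<beta>', \<delta>(card F + 1 := Q \<beta> - Q \<beta>'))"
| back_exit:
    "\<lbrakk> F = {} \<or> (\<forall>i\<in>F. Q (\<beta> - axis i (\<beta> $ i)) - Q \<beta> \<ge> \<delta> (card F) / 2) \<rbrakk>
     \<Longrightarrow> foba_gdt_step Q G \<epsilon> (Back, F, \<beta>, \<delta>) (Test, F, \<beta>, \<delta>)"
| back_remove:
    "\<lbrakk> F \<noteq> {}; j \<in> F; \<forall>i\<in>F. Q (\<beta> - axis j (\<beta> $ j)) \<le> Q (\<beta> - axis i (\<beta> $ i));
       Q (\<beta> - axis j (\<beta> $ j)) - Q \<beta> < \<delta> (card F) / 2;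
       is_restr_min Q (F - {j}) \<beta>' \<rbrakk>
     \<Longrightarrow> foba_gdt_step Q G \<epsilon> (Back, F, \<beta>, \<delta>) (Back, F - {j}, \<beta>', \<delta>)"

definition foba_init :: "('n::finite) foba_conf" where
  "foba_init = (Test, {}, 0, \<lambda>_. 0)"

fun foba_gdt_stopped :: "(real^'n \<Rightarrow> real^'n) \<Rightarrow> real \<Rightarrow> 'n foba_conf \<Rightarrow> bool" where
  "foba_gdt_stopped G \<epsilon> (ph, F, \<beta>, \<delta>) \<longleftrightarrow> ph = Test \<and> linf (G \<beta>) < \<epsilon>"

fun conf_support :: "'n foba_conf \<Rightarrow> 'n set" where
  "conf_support (ph, F, \<beta>, \<delta>) = F"

end

theory Submission imports Defs begin

text \<open>
  At every stopping test of FoBa-gdt the current iterate \<open>\<beta>\<close> minimizes \<open>Q\<close> on its support \<open>F\<close>,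
  and the backward step has certified that deleting any coordinate costs at least half the last
  forward gain \<open>\<delta>\<close>; by \<open>\<rho>\<^sub>+(1)\<close>-smoothness every coordinate of \<open>\<beta>\<close> on \<open>F\<close> therefore carries
  squared mass at least \<open>\<delta>/\<rho>\<^sub>+(1)\<close>. Comparing \<open>\<beta>\<close> with \<open>\<beta>bar\<close> through restricted strong
  convexity bounds the total squared mass of \<open>\<beta>\<close> outside \<open>supp \<beta>bar\<close> by a multiple of
  \<open>kbar \<delta>\<close>, because the forward gain dominates \<open>Q \<beta> - Q \<beta>bar\<close> and the choice of \<open>\<epsilon>\<close>
  makes the gradient at \<open>\<beta>bar\<close> negligible. Counting gives \<open>|F| + kbar < s\<close>, so all iterates
  stay in the regime where restricted strong convexity applies.

  Termination: each forward step lowers \<open>Q\<close> by at least \<open>\<epsilon>\<^sup>2/(2\<rho>\<^sub>+(1))\<close> and each deletion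
  raises it by less than half the gain recorded for that index. Keeping, for each index \<open>j\<close>,
  an upper bound \<open>V j\<close> on the objective last reached with \<open>j\<close> features, the weighted sum
  \<open>\<Sum>\<^sub>j (V j - min Q) base\<^sup>s\<^sup>-\<^sup>j\<close> with a large enough base is a potential that decreases by a
  fixed amount at every step.
\<close>

lemma norm_sq_eq_sum_coords: "(norm (x::real^'n))\<^sup>2 = (\<Sum>j\<in>UNIV. (x$j)\<^sup>2)"
  by (simp only: power2_norm_eq_inner inner_vec_def) (simp add: power2_eq_square)

lemma norm_sq_eq_sum_on: "supp (x::real^'n::finite) \<subseteq> A \<Longrightarrow> (norm x)\<^sup>2 = (\<Sum>j\<in>A. (x$j)\<^sup>2)"
  unfolding norm_sq_eq_sum_coords by (rule sum.mono_neutral_right) (auto simp: supp_def)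

lemma sum_coords_sq_le_norm_sq: "(\<Sum>j\<in>A. (x$j)\<^sup>2) \<le> (norm (x::real^'n::finite))\<^sup>2"
  unfolding norm_sq_eq_sum_coords by (rule sum_mono2) auto

lemma inner_eq_0_if_disjoint_supp: "supp x \<inter> supp y = {} \<Longrightarrow> (x::real^'n) \<bullet> y = 0"
  unfolding inner_vec_def supp_def by (rule sum.neutral) auto

lemma norm0_le_card: "supp (x::real^'n::finite) \<subseteq> S \<Longrightarrow> norm0 x \<le> card S"
  unfolding norm0_def by (simp add: card_mono)

lemma norm0_axis_le: "norm0 (axis i (c::real) :: real^'n::finite) \<le> 1"
proof -
  have "supp (axis i c :: real^'n) \<subseteq> {i}" by (auto simp: supp_def axis_def)
  from norm0_le_card[OF this] show ?thesis by simp
qed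

lemma norm_axis_sq: "(norm (axis i (c::real) :: real^'n))\<^sup>2 = c\<^sup>2"
  by (simp only: power2_norm_eq_inner inner_axis') (simp add: power2_eq_square)

lemma supp_add_axis: "supp (\<beta> + axis i t) \<subseteq> insert i (supp \<beta>)"
  by (auto simp: supp_def axis_def)

lemma supp_diff_subset: "supp (x - y) \<subseteq> supp x \<union> supp y"
  by (auto simp: supp_def)

lemma supp_remove_coord: "supp (\<beta> - axis j (\<beta> $ j)) = supp \<beta> - {j}"
  by (auto simp: supp_def axis_def)

lemma diff_axis_eq_add_axis: "(\<beta>::real^'n) - axis i b = \<beta> + axis i (- b)"
  by (simp add: vec_eq_iff axis_def)

lemma abs_le_linf: "\<bar>v $ j\<bar> \<le> linf (v::real^'n::finite)"
  unfolding linf_def by (rule Max_ge) auto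

lemma linf_le: "(\<And>j. \<bar>v $ j\<bar> \<le> c) \<Longrightarrow> linf (v::real^'n::finite) \<le> c"
  unfolding linf_def by (subst Max_le_iff) auto

lemma linf_nonneg: "0 \<le> linf (v::real^'n::finite)"
  using abs_le_linf[of v] abs_ge_zero order_trans by blast

lemma is_restr_min_empty: "is_restr_min Q {} (0::real^'n)"
proof -
  have "\<beta> = 0" if "supp \<beta> \<subseteq> {}" for \<beta> :: "real^'n"
    using that by (simp add: supp_def vec_eq_iff)
  thus ?thesis unfolding is_restr_min_def supp_def by auto
qed

lemma quadratic_ge_neg_square_div: "- (a\<^sup>2 / (2 * r)) \<le> a * c + r / 2 * c\<^sup>2" if "r > 0" for a c r :: real
proof -
  have "0 \<le> (a + r * c)\<^sup>2" by simp
  hence "- a\<^sup>2 \<le> 2 * r * (a * c + r / 2 * c\<^sup>2)" by (simp add: power2_eq_square algebra_simps)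
  thus ?thesis using that by (simp add: divide_simps mult.commute)
qed

lemma sparsity_condition_bound:
  fixes r k :: real and m kbar s :: nat
  assumes "r \<ge> 1" "k \<ge> 1"
    and "real s - real kbar > (real kbar + 1) * ((sqrt k + 1) * (2 * r))\<^sup>2"
    and "real m \<le> 2 * real kbar * r\<^sup>2 * (k - 1)"
  shows "m + 2 * kbar < s"
proof -
  have "(k + 1) * (4 * r\<^sup>2) \<le> (sqrt k + 1)\<^sup>2 * (4 * r\<^sup>2)"
    using assms(2) by (intro mult_right_mono) (auto simp: power2_eq_square algebra_simps)
  hence "(real kbar + 1) * ((k + 1) * (4 * r\<^sup>2)) \<le> (real kbar + 1) * ((sqrt k + 1) * (2 * r))\<^sup>2"
    by (intro mult_left_mono) (auto simp: power_mult_distrib)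
  moreover have "2 * real kbar * r\<^sup>2 * (k - 1) + real kbar \<le> (real kbar + 1) * ((k + 1) * (4 * r\<^sup>2))"
  proof -
    have "1 \<le> r\<^sup>2" using assms(1) by (simp add: one_le_power)
    hence "1 * 1 \<le> r\<^sup>2 * (2 * k + 6)" using assms(2) by (intro mult_mono) auto
    hence "0 \<le> real kbar * (r\<^sup>2 * (2 * k + 6) - 1) + 4 * (k + 1) * r\<^sup>2" using assms(2) by simp
    thus ?thesis by (simp add: algebra_simps)
  qed
  ultimately show ?thesis using assms(3,4) by linarith
qed

lemma sum_eq_sum_plus_changes:
  fixes f f' :: "'a \<Rightarrow> real"
  assumes "finite A" "S \<subseteq> A" "\<And>j. j \<in> A - S \<Longrightarrow> f' j = f j"
  shows "sum f' A = sum f A + (\<Sum>j\<in>S. f' j - f j)"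
proof -
  have "(\<Sum>j\<in>S. f' j - f j) = (\<Sum>j\<in>A. f' j - f j)"
    using assms by (intro sum.mono_neutral_left) auto
  thus ?thesis by (simp add: sum_subtractf)
qed

lemma no_infinite_chain_if_potential_decreases:
  fixes r :: "'c \<Rightarrow> 'c \<Rightarrow> bool" and \<phi> :: "'c \<Rightarrow> 'v \<Rightarrow> real"
  assumes init: "I c0 v0"
    and step: "\<And>c v c'. I c v \<Longrightarrow> r c c' \<Longrightarrow> \<exists>v'. I c' v' \<and> \<phi> c' v' \<le> \<phi> c v - d"
    and d_pos: "d > 0" and nonneg: "\<And>c v. I c v \<Longrightarrow> 0 \<le> \<phi> c v"
  shows "\<nexists>f. f 0 = c0 \<and> (\<forall>n. r (f n) (f (Suc n)))"
proof
  assume "\<exists>f. f 0 = c0 \<and> (\<forall>n. r (f n) (f (Suc n)))"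
  then obtain f where f0: "f 0 = c0" and chain: "\<And>n. r (f n) (f (Suc n))" by blast
  have descent: "\<exists>v. I (f n) v \<and> \<phi> (f n) v \<le> \<phi> c0 v0 - real n * d" for n
  proof (induction n)
    case 0
    show ?case using init f0 by auto
  next
    case (Suc n)
    then obtain v where "I (f n) v" "\<phi> (f n) v \<le> \<phi> c0 v0 - real n * d" by blast
    with step[OF _ chain] show ?case by (fastforce simp: algebra_simps)
  qed
  obtain n where "\<phi> c0 v0 / d < real n" using reals_Archimedean2 by blast
  hence "\<phi> c0 v0 - real n * d < 0" using d_pos by (simp add: field_simps)
  with descent[of n] nonneg show False by fastforce
qed

locale rsc_objective =
  fixes Q :: "real^'n::finite \<Rightarrow> real" and G :: "real^'n \<Rightarrow> real^'n"
    and \<rho>m \<rho>p :: "nat \<Rightarrow> real" and s :: nat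
  assumes rsc_s: "rsc Q G \<rho>m \<rho>p s" and rsc_1: "rsc Q G \<rho>m \<rho>p 1" and s_pos: "0 < s"
begin

lemma rho_pos: "\<rho>m s > 0" "\<rho>p s > 0" "\<rho>p 1 > 0"
  using rsc_s rsc_1 unfolding rsc_def by auto

lemma rsc_lower:
  "norm0 (\<beta>' - \<beta>) \<le> s \<Longrightarrow> \<rho>m s / 2 * (norm (\<beta>' - \<beta>))\<^sup>2 \<le> Q \<beta>' - Q \<beta> - G \<beta> \<bullet> (\<beta>' - \<beta>)"
  using rsc_s unfolding rsc_def by blast

lemma rsc_upper:
  "norm0 (\<beta>' - \<beta>) \<le> s \<Longrightarrow> Q \<beta>' - Q \<beta> - G \<beta> \<bullet> (\<beta>' - \<beta>) \<le> \<rho>p s / 2 * (norm (\<beta>' - \<beta>))\<^sup>2"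
  using rsc_s unfolding rsc_def by blast

lemma rsc_upper_1:
  "norm0 (\<beta>' - \<beta>) \<le> 1 \<Longrightarrow> Q \<beta>' - Q \<beta> - G \<beta> \<bullet> (\<beta>' - \<beta>) \<le> \<rho>p 1 / 2 * (norm (\<beta>' - \<beta>))\<^sup>2"
  using rsc_1 unfolding rsc_def by blast

lemma coord_step_upper: "Q (\<beta> + axis i t) \<le> Q \<beta> + G \<beta> $ i * t + \<rho>p 1 / 2 * t\<^sup>2"
proof -
  have "norm0 ((\<beta> + axis i t) - \<beta>) \<le> 1" using norm0_axis_le by simp
  from rsc_upper_1[OF this] show ?thesis by (simp add: inner_axis norm_axis_sq)
qed

lemma rho_minus_le: "\<rho>m s \<le> \<rho>p 1" "\<rho>m s \<le> \<rho>p s"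
proof -
  fix i :: 'n
  have "norm0 (axis i (1::real) - 0 :: real^'n) \<le> 1" using norm0_axis_le by simp
  from rsc_upper_1[OF this] have up1: "Q (axis i 1) - Q 0 - G 0 $ i \<le> \<rho>p 1 / 2"
    by (simp add: inner_axis)
  have ns: "norm0 (axis i (1::real) - 0 :: real^'n) \<le> s" using norm0_axis_le[of i 1] s_pos by simp
  from rsc_lower[OF ns] rsc_upper[OF ns]
  show "\<rho>m s \<le> \<rho>p 1" "\<rho>m s \<le> \<rho>p s" using up1 by (simp_all add: inner_axis)
qed

lemma coord_descent:
  "Q (\<beta> + axis i (- (G \<beta> $ i) / \<rho>p 1)) \<le> Q \<beta> - (G \<beta> $ i)\<^sup>2 / (2 * \<rho>p 1)"
proof -
  have "G \<beta> $ i * (- (G \<beta> $ i) / \<rho>p 1) + \<rho>p 1 / 2 * (- (G \<beta> $ i) / \<rho>p 1)\<^sup>2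
      = - ((G \<beta> $ i)\<^sup>2 / (2 * \<rho>p 1))"
    using rho_pos by (simp add: field_simps power2_eq_square)
  thus ?thesis using coord_step_upper[of \<beta> i "- (G \<beta> $ i) / \<rho>p 1"] by linarith
qed

lemma grad_coord_zero_if_coord_min:
  assumes "\<forall>t. Q \<beta> \<le> Q (\<beta> + axis i t)"
  shows "G \<beta> $ i = 0"
proof -
  have "(G \<beta> $ i)\<^sup>2 / (2 * \<rho>p 1) \<le> 0"
    using coord_descent[of \<beta> i] assms[rule_format, of "- (G \<beta> $ i) / \<rho>p 1"] by linarith
  thus ?thesis using rho_pos by (simp add: divide_le_0_iff)
qed

lemma restr_min_grad_zero:
  assumes "is_restr_min Q F \<beta>" "i \<in> F" shows "G \<beta> $ i = 0"
proof (rule grad_coord_zero_if_coord_min, rule allI)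
  fix t
  have "supp (\<beta> + axis i t) \<subseteq> F"
    using supp_add_axis[of \<beta> i t] assms unfolding is_restr_min_def by blast
  thus "Q \<beta> \<le> Q (\<beta> + axis i t)" using assms(1) unfolding is_restr_min_def by blast
qed

lemma restr_min_forward_decrease:
  assumes "supp \<beta> \<subseteq> F" "is_restr_min Q (insert i F) \<beta>'"
  shows "(G \<beta> $ i)\<^sup>2 / (2 * \<rho>p 1) \<le> Q \<beta> - Q \<beta>'"
proof -
  let ?t = "- (G \<beta> $ i) / \<rho>p 1"
  have "supp (\<beta> + axis i ?t) \<subseteq> insert i F" using supp_add_axis[of \<beta> i ?t] assms(1) by blast
  hence "Q \<beta>' \<le> Q (\<beta> + axis i ?t)" using assms(2) unfolding is_restr_min_def by blast
  thus ?thesis using coord_descent[of \<beta> i] by linarith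
qed

lemma restr_min_removal_cost:
  assumes "is_restr_min Q F \<beta>" "i \<in> F"
  shows "Q (\<beta> - axis i (\<beta> $ i)) - Q \<beta> \<le> \<rho>p 1 / 2 * (\<beta> $ i)\<^sup>2"
  using coord_step_upper[of \<beta> i "- (\<beta> $ i)"] restr_min_grad_zero[OF assms]
  by (simp add: diff_axis_eq_add_axis)

lemma gap_le_sum_grad_sq:
  assumes "norm0 (\<beta>' - \<beta>) \<le> s"
  shows "Q \<beta> - Q \<beta>' \<le> (\<Sum>j\<in>supp (\<beta>' - \<beta>). (G \<beta> $ j)\<^sup>2 / (2 * \<rho>m s))"
proof -
  define d where "d = \<beta>' - \<beta>"
  define g where "g = G \<beta>"
  have "- (\<Sum>j\<in>supp d. (g $ j)\<^sup>2 / (2 * \<rho>m s))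
      = (\<Sum>j\<in>UNIV. if j \<in> supp d then - ((g $ j)\<^sup>2 / (2 * \<rho>m s)) else 0)"
    by (simp add: sum.If_cases sum_negf)
  also have "\<dots> \<le> (\<Sum>j\<in>UNIV. g $ j * d $ j + \<rho>m s / 2 * (d $ j)\<^sup>2)"
    using quadratic_ge_neg_square_div rho_pos by (intro sum_mono) (auto simp: supp_def)
  also have "\<dots> = g \<bullet> d + \<rho>m s / 2 * (norm d)\<^sup>2"
    by (simp add: inner_vec_def norm_sq_eq_sum_coords sum.distrib sum_distrib_left)
  also have "\<dots> \<le> Q \<beta>' - Q \<beta>" using rsc_lower[OF assms] unfolding d_def g_def by linarith
  finally show ?thesis unfolding d_def g_def by linarith
qed

lemma sparse_gap_lower:
  assumes \<beta>: "supp \<beta> \<subseteq> F" and \<beta>bar: "supp \<beta>bar \<subseteq> Fb" and card: "card F + card Fb \<le> s"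
    and grad_bar: "\<forall>j\<in>Fb. G \<beta>bar $ j = 0"
    and small: "\<forall>j\<in>F - Fb. \<bar>G \<beta>bar $ j\<bar> \<le> \<rho>m s / 2 * \<bar>\<beta> $ j\<bar>"
  shows "\<rho>m s / 2 * (\<Sum>j\<in>Fb - F. (\<beta>bar $ j)\<^sup>2) \<le> Q \<beta> - Q \<beta>bar"
proof -
  define d where "d = \<beta> - \<beta>bar"
  define x2 where "x2 = (\<Sum>j\<in>F - Fb. (\<beta> $ j)\<^sup>2)"
  define w2 where "w2 = (\<Sum>j\<in>Fb - F. (\<beta>bar $ j)\<^sup>2)"
  have "norm0 d \<le> card (F \<union> Fb)"
    using supp_diff_subset[of \<beta> \<beta>bar] \<beta> \<beta>bar unfolding d_def by (intro norm0_le_card) blast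
  also have "\<dots> \<le> s" using card card_Un_le[of F Fb] by linarith
  finally have lower: "\<rho>m s / 2 * (norm d)\<^sup>2 \<le> Q \<beta> - Q \<beta>bar - G \<beta>bar \<bullet> d"
    using rsc_lower unfolding d_def by blast
  have zero: "\<And>j. j \<notin> F \<Longrightarrow> \<beta> $ j = 0" "\<And>j. j \<notin> Fb \<Longrightarrow> \<beta>bar $ j = 0"
    using \<beta> \<beta>bar by (auto simp: supp_def)
  have "x2 = (\<Sum>j\<in>F - Fb. (d $ j)\<^sup>2)"
    unfolding x2_def d_def by (intro sum.cong) (auto simp: zero)
  moreover have "w2 = (\<Sum>j\<in>Fb - F. (d $ j)\<^sup>2)"
    unfolding w2_def d_def by (intro sum.cong) (auto simp: zero power2_commute)
  ultimately have "x2 + w2 = (\<Sum>j\<in>(F - Fb) \<union> (Fb - F). (d $ j)\<^sup>2)"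
    by (subst sum.union_disjoint) auto
  also have "\<dots> \<le> (norm d)\<^sup>2" by (rule sum_coords_sq_le_norm_sq)
  finally have norm_d: "x2 + w2 \<le> (norm d)\<^sup>2" .
  have "- (\<rho>m s / 2 * x2) = (\<Sum>j\<in>UNIV. if j \<in> F - Fb then - (\<rho>m s / 2 * (\<beta> $ j)\<^sup>2) else 0)"
    unfolding x2_def by (simp add: sum.If_cases sum_negf sum_distrib_left set_diff_eq)
  also have "\<dots> \<le> (\<Sum>j\<in>UNIV. G \<beta>bar $ j * d $ j)"
  proof (rule sum_mono)
    fix j
    show "(if j \<in> F - Fb then - (\<rho>m s / 2 * (\<beta> $ j)\<^sup>2) else 0) \<le> G \<beta>bar $ j * d $ j"
    proof (cases "j \<in> F - Fb")
      case True
      have "- (G \<beta>bar $ j * \<beta> $ j) \<le> \<bar>G \<beta>bar $ j\<bar> * \<bar>\<beta> $ j\<bar>"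
        by (metis abs_ge_minus_self abs_mult)
      also have "\<dots> \<le> \<rho>m s / 2 * \<bar>\<beta> $ j\<bar> * \<bar>\<beta> $ j\<bar>"
        using small True by (intro mult_right_mono) auto
      finally show ?thesis using True zero by (simp add: d_def power2_eq_square abs_mult_self_eq)
    qed (use grad_bar zero in \<open>cases "j \<in> Fb"; auto simp: d_def\<close>)
  qed
  also have "\<dots> = G \<beta>bar \<bullet> d" by (simp add: inner_vec_def)
  finally have "- (\<rho>m s / 2 * x2) \<le> G \<beta>bar \<bullet> d" .
  moreover have "\<rho>m s / 2 * (x2 + w2) \<le> \<rho>m s / 2 * (norm d)\<^sup>2"
    using norm_d rho_pos by (intro mult_left_mono) auto
  ultimately show ?thesis using lower unfolding w2_def by (simp add: algebra_simps)
qed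

lemma restr_min_sparse_comparison:
  assumes \<beta>: "is_restr_min Q F \<beta>" and \<beta>bar: "supp \<beta>bar \<subseteq> Fb" and card: "card F + card Fb \<le> s"
    and grad_bar: "\<forall>j\<in>Fb. G \<beta>bar $ j = 0"
  shows "\<rho>m s / 2 * (\<Sum>j\<in>F - Fb. (\<beta> $ j)\<^sup>2) + (Q \<beta> - Q \<beta>bar)
      \<le> \<rho>p s / 2 * (\<Sum>j\<in>Fb - F. (\<beta>bar $ j)\<^sup>2)"
proof -
  define z where "z = (\<chi> j. if j \<in> F then \<beta>bar $ j else 0)"
  have zero: "\<And>j. j \<notin> F \<Longrightarrow> \<beta> $ j = 0" "\<And>j. j \<notin> Fb \<Longrightarrow> \<beta>bar $ j = 0"
    using \<beta> \<beta>bar by (auto simp: supp_def is_restr_min_def)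
  have z\<beta>: "supp (z - \<beta>) \<subseteq> F" by (auto simp: supp_def z_def zero)
  have z\<beta>bar: "supp (z - \<beta>bar) \<subseteq> Fb - F" using \<beta>bar by (auto simp: supp_def z_def)
  have "norm0 (z - \<beta>) \<le> s" using norm0_le_card[OF z\<beta>] card by linarith
  from rsc_lower[OF this]
  have lower: "\<rho>m s / 2 * (norm (z - \<beta>))\<^sup>2 \<le> Q z - Q \<beta>"
    using restr_min_grad_zero[OF \<beta>] z\<beta> inner_eq_0_if_disjoint_supp[of "G \<beta>" "z - \<beta>"]
    by (force simp: supp_def)
  have "(\<Sum>j\<in>F - Fb. (\<beta> $ j)\<^sup>2) = (\<Sum>j\<in>F - Fb. ((z - \<beta>) $ j)\<^sup>2)"
    by (intro sum.cong) (auto simp: z_def zero power2_commute)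
  also have "\<dots> \<le> (norm (z - \<beta>))\<^sup>2" by (rule sum_coords_sq_le_norm_sq)
  finally have "\<rho>m s / 2 * (\<Sum>j\<in>F - Fb. (\<beta> $ j)\<^sup>2) \<le> \<rho>m s / 2 * (norm (z - \<beta>))\<^sup>2"
    using rho_pos by (intro mult_left_mono) auto
  moreover have "card (Fb - F) \<le> card Fb" by (rule card_mono) auto
  hence "norm0 (z - \<beta>bar) \<le> s" using norm0_le_card[OF z\<beta>bar] card by linarith
  from rsc_upper[OF this]
  have "Q z - Q \<beta>bar \<le> \<rho>p s / 2 * (norm (z - \<beta>bar))\<^sup>2"
    using grad_bar z\<beta>bar inner_eq_0_if_disjoint_supp[of "G \<beta>bar" "z - \<beta>bar"]
    by (force simp: supp_def)
  moreover have "(norm (z - \<beta>bar))\<^sup>2 = (\<Sum>j\<in>Fb - F. (\<beta>bar $ j)\<^sup>2)"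
    unfolding norm_sq_eq_sum_on[OF z\<beta>bar] by (rule sum.cong) (auto simp: z_def power2_commute)
  ultimately show ?thesis using lower by simp
qed

end

definition backward_done :: "(real^'n \<Rightarrow> real) \<Rightarrow> 'n set \<Rightarrow> real^'n \<Rightarrow> (nat \<Rightarrow> real) \<Rightarrow> bool" where
  "backward_done Q F \<beta> \<delta> \<longleftrightarrow> F = {} \<or> (\<forall>i\<in>F. \<delta> (card F) / 2 \<le> Q (\<beta> - axis i (\<beta> $ i)) - Q \<beta>)"

locale foba_gdt_setting = rsc_objective Q G \<rho>m \<rho>p s
  for Q :: "real^'n::finite \<Rightarrow> real" and G \<rho>m \<rho>p s +
  fixes \<beta>bar :: "real^'n" and kbar :: nat and \<epsilon> :: real
  assumes hat_exists: "\<forall>F. \<exists>\<beta>. is_restr_min Q F \<beta>"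
    and betabar_opt: "\<forall>\<beta>. norm0 \<beta> \<le> kbar \<longrightarrow> Q \<beta>bar \<le> Q \<beta>"
    and kbar_def: "kbar = norm0 \<beta>bar"
    and s_cond: "real s - real kbar > (real kbar + 1) *
        ((sqrt (\<rho>p s / \<rho>m s) + 1) * (2 * \<rho>p 1 / \<rho>m s))\<^sup>2"
    and eps_cond: "\<epsilon> > 2 * sqrt 2 * \<rho>p 1 / \<rho>m s * linf (G \<beta>bar)"
begin

lemma card_supp_bar: "card (supp \<beta>bar) = kbar"
  using kbar_def by (simp add: norm0_def)

lemma kbar_lt_s: "kbar < s"
proof -
  have "0 \<le> (real kbar + 1) * ((sqrt (\<rho>p s / \<rho>m s) + 1) * (2 * \<rho>p 1 / \<rho>m s))\<^sup>2"
    by simp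
  thus ?thesis using s_cond by linarith
qed

lemma grad_bar_zero: "j \<in> supp \<beta>bar \<Longrightarrow> G \<beta>bar $ j = 0"
proof (rule grad_coord_zero_if_coord_min, rule allI)
  fix t assume "j \<in> supp \<beta>bar"
  hence "supp (\<beta>bar + axis j t) \<subseteq> supp \<beta>bar" using supp_add_axis[of \<beta>bar j t] by blast
  hence "norm0 (\<beta>bar + axis j t) \<le> kbar" using norm0_le_card card_supp_bar by metis
  thus "Q \<beta>bar \<le> Q (\<beta>bar + axis j t)" using betabar_opt by blast
qed

lemma eps_pos: "\<epsilon> > 0"
proof -
  have "0 \<le> 2 * sqrt 2 * \<rho>p 1 / \<rho>m s * linf (G \<beta>bar)"
    using rho_pos linf_nonneg[of "G \<beta>bar"] by simp
  thus ?thesis using eps_cond by linarith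
qed

definition \<eta> :: real where
  "\<eta> = \<epsilon>\<^sup>2 / (4 * \<rho>p 1)"

lemma eta_pos: "\<eta> > 0"
  unfolding \<eta>_def using eps_pos rho_pos by simp

lemma linf_grad_bar_le:
  assumes "2 * \<eta> \<le> \<delta>" "\<delta> \<le> \<rho>p 1 * b\<^sup>2"
  shows "linf (G \<beta>bar) \<le> \<rho>m s / 2 * \<bar>b\<bar>"
proof -
  define c where "c = sqrt 2 * \<rho>p 1"
  have c_pos: "c > 0" unfolding c_def using rho_pos by simp
  have "\<epsilon>\<^sup>2 \<le> 2 * \<rho>p 1 * \<delta>" using assms(1) rho_pos unfolding \<eta>_def by (simp add: field_simps)
  also have "\<dots> \<le> 2 * \<rho>p 1 * (\<rho>p 1 * b\<^sup>2)" using assms(2) rho_pos by simp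
  also have "\<dots> = 2 * (\<rho>p 1)\<^sup>2 * b\<^sup>2" by (simp add: power2_eq_square)
  also have "\<dots> = (c * \<bar>b\<bar>)\<^sup>2" unfolding c_def by (simp add: power_mult_distrib)
  finally have "\<epsilon> \<le> c * \<bar>b\<bar>" by (rule power2_le_imp_le) (use c_pos in simp)
  moreover have "c * (2 * linf (G \<beta>bar) / \<rho>m s) < \<epsilon>"
    using eps_cond unfolding c_def by (simp add: mult_ac)
  ultimately have "c * (2 * linf (G \<beta>bar) / \<rho>m s) < c * \<bar>b\<bar>" by linarith
  hence "2 * linf (G \<beta>bar) / \<rho>m s < \<bar>b\<bar>" using c_pos mult_less_cancel_left_pos by blast
  thus ?thesis using rho_pos by (simp add: field_simps)
qed

lemma linf_grad_le_max_coord: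
  assumes "is_restr_min Q F \<beta>" "\<forall>i'. i' \<notin> F \<longrightarrow> \<bar>G \<beta> $ i'\<bar> \<le> \<bar>G \<beta> $ i\<bar>"
  shows "linf (G \<beta>) \<le> \<bar>G \<beta> $ i\<bar>"
  using assms restr_min_grad_zero by (intro linf_le) (metis abs_ge_zero abs_zero)

lemma forward_decrease:
  assumes "is_restr_min Q F \<beta>" "\<forall>i'. i' \<notin> F \<longrightarrow> \<bar>G \<beta> $ i'\<bar> \<le> \<bar>G \<beta> $ i\<bar>"
    and "\<not> linf (G \<beta>) < \<epsilon>" and "is_restr_min Q (insert i F) \<beta>'"
  shows "2 * \<eta> \<le> Q \<beta> - Q \<beta>'"
proof -
  have "\<epsilon> \<le> \<bar>G \<beta> $ i\<bar>" using linf_grad_le_max_coord[OF assms(1,2)] assms(3) by linarith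
  hence "\<epsilon>\<^sup>2 \<le> (G \<beta> $ i)\<^sup>2" using eps_pos by (metis abs_le_square_iff abs_of_pos)
  hence "2 * \<eta> \<le> (G \<beta> $ i)\<^sup>2 / (2 * \<rho>p 1)" using rho_pos unfolding \<eta>_def by (simp add: divide_right_mono)
  also have "\<dots> \<le> Q \<beta> - Q \<beta>'"
    using assms(1,4) by (intro restr_min_forward_decrease) (auto simp: is_restr_min_def)
  finally show ?thesis .
qed

lemma forward_gap:
  assumes \<beta>: "is_restr_min Q F \<beta>" and card: "card F + kbar \<le> s"
    and imax: "\<forall>i'. i' \<notin> F \<longrightarrow> \<bar>G \<beta> $ i'\<bar> \<le> \<bar>G \<beta> $ i\<bar>"
    and \<beta>': "is_restr_min Q (insert i F) \<beta>'"
  shows "Q \<beta> - Q \<beta>bar \<le> real kbar * \<rho>p 1 / \<rho>m s * (Q \<beta> - Q \<beta>')"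
proof -
  define Fb where "Fb = supp \<beta>bar"
  define f where "f j = (G \<beta> $ j)\<^sup>2 / (2 * \<rho>m s)" for j
  have supp_\<beta>: "supp \<beta> \<subseteq> F" using \<beta> unfolding is_restr_min_def by simp
  have f0: "\<And>j. j \<in> F \<Longrightarrow> f j = 0" using restr_min_grad_zero[OF \<beta>] by (simp add: f_def)
  have d: "supp (\<beta>bar - \<beta>) \<subseteq> F \<union> Fb" using supp_diff_subset supp_\<beta> unfolding Fb_def by blast
  have "norm0 (\<beta>bar - \<beta>) \<le> card (F \<union> Fb)" using norm0_le_card[OF d] .
  also have "\<dots> \<le> s" using card card_Un_le[of F Fb] card_supp_bar unfolding Fb_def by linarith
  finally have "Q \<beta> - Q \<beta>bar \<le> sum f (supp (\<beta>bar - \<beta>))"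
    unfolding f_def by (rule gap_le_sum_grad_sq)
  also have "\<dots> \<le> sum f (F \<union> Fb)" using d rho_pos by (intro sum_mono2) (auto simp: f_def)
  also have "\<dots> = sum f (Fb - F)" using f0 by (intro sum.mono_neutral_right) auto
  also have "\<dots> \<le> real (card (Fb - F)) * f i"
    using imax rho_pos by (intro sum_bounded_above) (auto simp: f_def abs_le_square_iff divide_right_mono)
  also have "\<dots> \<le> real kbar * f i"
    using card_mono[of Fb "Fb - F"] card_supp_bar rho_pos unfolding Fb_def f_def
    by (intro mult_right_mono) auto
  also have "f i = \<rho>p 1 / \<rho>m s * ((G \<beta> $ i)\<^sup>2 / (2 * \<rho>p 1))"
    unfolding f_def using rho_pos by (simp add: field_simps)
  also have "\<dots> \<le> \<rho>p 1 / \<rho>m s * (Q \<beta> - Q \<beta>')"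
    using restr_min_forward_decrease[OF supp_\<beta> \<beta>'] rho_pos by (intro mult_left_mono) auto
  finally show ?thesis using rho_pos by (simp add: mult_left_mono mult.assoc)
qed

lemma card_lt_if_backward_done:
  assumes \<beta>: "is_restr_min Q F \<beta>" and card: "card F + kbar \<le> s"
    and \<delta>_ge: "2 * \<eta> \<le> \<delta>"
    and removal: "\<forall>i\<in>F. \<delta> / 2 \<le> Q (\<beta> - axis i (\<beta> $ i)) - Q \<beta>"
    and gap: "Q \<beta> - Q \<beta>bar \<le> real kbar * \<rho>p 1 / \<rho>m s * \<delta>"
  shows "card F + kbar < s"
proof -
  define Fb where "Fb = supp \<beta>bar"
  define x2 where "x2 = (\<Sum>j\<in>F - Fb. (\<beta> $ j)\<^sup>2)"
  define w2 where "w2 = (\<Sum>j\<in>Fb - F. (\<beta>bar $ j)\<^sup>2)"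
  define m where "m = card (F - Fb)"
  define r where "r = \<rho>p 1 / \<rho>m s"
  define k where "k = \<rho>p s / \<rho>m s"
  have \<delta>_pos: "\<delta> > 0" using eta_pos \<delta>_ge by linarith
  have coord_large: "\<delta> \<le> \<rho>p 1 * (\<beta> $ i)\<^sup>2" if "i \<in> F" for i
    using restr_min_removal_cost[OF \<beta> that] removal that by fastforce
  have small: "\<forall>j\<in>F - Fb. \<bar>G \<beta>bar $ j\<bar> \<le> \<rho>m s / 2 * \<bar>\<beta> $ j\<bar>"
    using abs_le_linf linf_grad_bar_le[OF \<delta>_ge coord_large] order_trans by blast
  have card': "card F + card Fb \<le> s" using card card_supp_bar unfolding Fb_def by simp
  have supp_\<beta>: "supp \<beta> \<subseteq> F" using \<beta> unfolding is_restr_min_def by simp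
  have grad_bar: "\<forall>j\<in>Fb. G \<beta>bar $ j = 0" using grad_bar_zero unfolding Fb_def by blast
  have lower: "\<rho>m s / 2 * w2 \<le> Q \<beta> - Q \<beta>bar"
    unfolding w2_def using sparse_gap_lower[OF supp_\<beta> _ card' grad_bar small] Fb_def by simp
  have upper: "\<rho>m s / 2 * x2 + (Q \<beta> - Q \<beta>bar) \<le> \<rho>p s / 2 * w2"
    unfolding x2_def w2_def using restr_min_sparse_comparison[OF \<beta> _ card' grad_bar] Fb_def by simp
  have "real m * (\<delta> / \<rho>p 1) \<le> x2"
    unfolding m_def x2_def using coord_large rho_pos
    by (intro sum_bounded_below) (simp add: pos_divide_le_eq mult.commute)
  also have "x2 \<le> (k - 1) * w2"
  proof -
    have "\<rho>m s / 2 * x2 \<le> \<rho>p s / 2 * w2 - \<rho>m s / 2 * w2" using lower upper by linarith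
    thus ?thesis using rho_pos unfolding k_def by (simp add: field_simps)
  qed
  also have "\<dots> \<le> (k - 1) * (2 * real kbar * r * \<delta> / \<rho>m s)"
  proof (rule mult_left_mono)
    have "\<rho>m s * w2 \<le> 2 * (real kbar * \<rho>p 1 / \<rho>m s * \<delta>)" using lower gap by linarith
    thus "w2 \<le> 2 * real kbar * r * \<delta> / \<rho>m s" using rho_pos unfolding r_def by (simp add: field_simps)
    show "0 \<le> k - 1" using rho_minus_le rho_pos unfolding k_def by simp
  qed
  also have "\<dots> = 2 * real kbar * r\<^sup>2 * (k - 1) * (\<delta> / \<rho>p 1)"
    using rho_pos unfolding r_def by (simp add: field_simps power2_eq_square)
  finally have "real m \<le> 2 * real kbar * r\<^sup>2 * (k - 1)"
    using \<delta>_pos rho_pos mult_le_cancel_right_pos[of "\<delta> / \<rho>p 1"] by simp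
  moreover have "r \<ge> 1" "k \<ge> 1" using rho_minus_le rho_pos unfolding r_def k_def by simp_all
  moreover have "real s - real kbar > (real kbar + 1) * ((sqrt k + 1) * (2 * r))\<^sup>2"
    using s_cond unfolding r_def k_def by simp
  ultimately have "m + 2 * kbar < s" using sparsity_condition_bound by blast
  moreover have "card F \<le> card ((F - Fb) \<union> Fb)" by (rule card_mono) auto
  hence "card F \<le> m + kbar" using card_Un_le[of "F - Fb" Fb] card_supp_bar unfolding m_def Fb_def by simp
  ultimately show ?thesis by linarith
qed

definition Qmin :: real where
  "Qmin = Q (SOME \<beta>. is_restr_min Q UNIV \<beta>)"

lemma Qmin_le: "Qmin \<le> Q \<beta>"
proof -
  have "is_restr_min Q UNIV (SOME \<beta>. is_restr_min Q UNIV \<beta>)" using hat_exists someI_ex by metis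
  thus ?thesis unfolding Qmin_def is_restr_min_def by blast
qed

definition span :: real where
  "span = Q 0 - Qmin + \<eta>"

definition base :: real where
  "base = span / \<eta> + 1"

lemma span_ge_eta: "\<eta> \<le> span"
  unfolding span_def using Qmin_le[of 0] by simp

lemma base_pow_ge_1: "1 \<le> base ^ n"
  unfolding base_def using span_ge_eta eta_pos by (simp add: one_le_power)

lemma eta_times_base: "\<eta> * base = span + \<eta>"
  unfolding base_def using eta_pos by (simp add: field_simps)

text \<open>\<open>V j\<close> bounds the objective value last reached with \<open>j\<close> features; its chain condition
  records that each forward step to index \<open>j\<close> gained \<open>\<delta> j\<close>.\<close>

fun foba_inv :: "'n foba_conf \<Rightarrow> (nat \<Rightarrow> real) \<Rightarrow> bool" where
  "foba_inv (ph, F, \<beta>, \<delta>) V \<longleftrightarrow>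
     is_restr_min Q F \<beta> \<and> card F + kbar \<le> s \<and>
     (\<forall>j\<in>{1..card F}. 2 * \<eta> \<le> \<delta> j \<and> V j + \<delta> j \<le> Q \<beta>bar + real kbar * \<rho>p 1 / \<rho>m s * \<delta> j) \<and>
     (\<forall>j<card F. V (Suc j) + \<delta> (Suc j) \<le> V j) \<and>
     Q \<beta> \<le> V (card F) \<and>
     (\<forall>j\<le>card F. Qmin \<le> V j \<and> V j \<le> Q 0) \<and>
     (ph = Test \<longrightarrow> backward_done Q F \<beta> \<delta>)"

text \<open>Indices beyond the current support get the maximal weight \<open>span\<close>; since
  \<open>\<eta> * base = span + \<eta>\<close>, a decrease of \<open>V k\<close> by \<open>\<eta>\<close> outweighs resetting index \<open>k + 1\<close>.\<close>

definition weight :: "'n set \<Rightarrow> (nat \<Rightarrow> real) \<Rightarrow> nat \<Rightarrow> real" where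
  "weight F V j = (if j \<le> card F then V j - Qmin else span)"

fun potential :: "'n foba_conf \<Rightarrow> (nat \<Rightarrow> real) \<Rightarrow> real" where
  "potential (ph, F, \<beta>, \<delta>) V =
     (\<Sum>j\<le>s. weight F V j * base ^ (s - j)) + (if ph = Back then \<eta> / 2 else 0)"

lemma potential_nonneg: "foba_inv c V \<Longrightarrow> 0 \<le> potential c V"
proof (cases c)
  case (fields ph F \<beta> \<delta>)
  assume inv: "foba_inv c V"
  have "0 \<le> weight F V j" for j
    using inv span_ge_eta eta_pos unfolding fields weight_def by auto
  hence "0 \<le> (\<Sum>j\<le>s. weight F V j * base ^ (s - j))"
    using base_pow_ge_1 by (intro sum_nonneg) (meson order_trans zero_le_mult_iff zero_le_one)
  thus ?thesis using eta_pos unfolding fields by simp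
qed

lemma weighted_sum_forward_decrease:
  assumes "card F = k" "card F' = Suc k" "Suc k \<le> s" "x \<le> Q 0 - 2 * \<eta>"
  shows "(\<Sum>j\<le>s. weight F' (V(Suc k := x)) j * base ^ (s - j))
    \<le> (\<Sum>j\<le>s. weight F V j * base ^ (s - j)) - 3 * \<eta>"
proof -
  define w where "w j = weight F V j * base ^ (s - j)" for j
  define w' where "w' j = weight F' (V(Suc k := x)) j * base ^ (s - j)" for j
  have "sum w' {..s} = sum w {..s} + (\<Sum>j\<in>{Suc k}. w' j - w j)"
    using assms(1-3) by (intro sum_eq_sum_plus_changes) (auto simp: w_def w'_def weight_def)
  also have "(\<Sum>j\<in>{Suc k}. w' j - w j) = (x - Qmin - span) * base ^ (s - Suc k)"
    using assms(1,2) by (simp add: w_def w'_def weight_def left_diff_distrib)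
  also have "\<dots> \<le> - (3 * \<eta>) * base ^ (s - Suc k)"
    using assms(4) base_pow_ge_1 by (intro mult_right_mono) (auto simp: span_def intro: order_trans[OF zero_le_one])
  also have "\<dots> \<le> - (3 * \<eta>)" using base_pow_ge_1 eta_pos by simp
  finally show ?thesis by (simp add: w_def w'_def)
qed

lemma weighted_sum_removal_decrease:
  assumes "card F = Suc k" "card F' = k" "Suc k \<le> s" "x \<le> V k - \<eta>" "Qmin \<le> V (Suc k)"
  shows "(\<Sum>i\<le>s. weight F' (V(k := x)) i * base ^ (s - i))
    \<le> (\<Sum>i\<le>s. weight F V i * base ^ (s - i)) - \<eta>"
proof -
  define p where "p = base ^ (s - Suc k)"
  have p_ge: "1 \<le> p" unfolding p_def by (rule base_pow_ge_1)
  have "s - k = Suc (s - Suc k)" using assms(3) by arith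
  hence base_k: "base ^ (s - k) = base * p" unfolding p_def by simp
  define w where "w i = weight F V i * base ^ (s - i)" for i
  define w' where "w' i = weight F' (V(k := x)) i * base ^ (s - i)" for i
  have "sum w' {..s} = sum w {..s} + (\<Sum>i\<in>{k, Suc k}. w' i - w i)"
    using assms(1-3) by (intro sum_eq_sum_plus_changes) (auto simp: w_def w'_def weight_def)
  also have "(\<Sum>i\<in>{k, Suc k}. w' i - w i) = (x - V k) * base ^ (s - k) + (span - (V (Suc k) - Qmin)) * p"
    using assms(1,2) by (simp add: w_def w'_def weight_def p_def algebra_simps)
  also have "(x - V k) * base ^ (s - k) \<le> - \<eta> * (base * p)"
    unfolding base_k using assms(4) p_ge base_pow_ge_1[of 1] by (intro mult_right_mono) auto
  also have "(span - (V (Suc k) - Qmin)) * p \<le> span * p"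
    using assms(5) p_ge by (intro mult_right_mono) auto
  also have "- \<eta> * (base * p) + span * p = - \<eta> * p" using eta_times_base by (simp add: algebra_simps)
  also have "- \<eta> * p \<le> - \<eta>" using p_ge eta_pos by simp
  finally show ?thesis unfolding w_def w'_def by simp
qed

lemma foba_inv_init: "foba_inv foba_init (\<lambda>_. Q 0)"
  using is_restr_min_empty kbar_lt_s Qmin_le by (simp add: foba_init_def backward_done_def)

lemma inv_test_card_lt:
  assumes "foba_inv (Test, F, \<beta>, \<delta>) V" shows "card F + kbar < s"
proof (cases "F = {}")
  case True
  thus ?thesis using kbar_lt_s by simp
next
  case False
  hence "card F \<in> {1..card F}" by (simp add: Suc_leI card_gt_0_iff)
  with assms have \<beta>: "is_restr_min Q F \<beta>" and card: "card F + kbar \<le> s"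
    and \<delta>_ge: "2 * \<eta> \<le> \<delta> (card F)"
    and recorded: "V (card F) + \<delta> (card F) \<le> Q \<beta>bar + real kbar * \<rho>p 1 / \<rho>m s * \<delta> (card F)"
    and "Q \<beta> \<le> V (card F)"
    and removal: "\<forall>i\<in>F. \<delta> (card F) / 2 \<le> Q (\<beta> - axis i (\<beta> $ i)) - Q \<beta>"
    using False by (auto simp: backward_done_def)
  have "\<delta> (card F) > 0" using \<delta>_ge eta_pos by linarith
  with recorded \<open>Q \<beta> \<le> V (card F)\<close>
  have "Q \<beta> - Q \<beta>bar \<le> real kbar * \<rho>p 1 / \<rho>m s * \<delta> (card F)" by linarith
  with \<beta> card \<delta>_ge removal show ?thesis by (rule card_lt_if_backward_done)
qed

lemma forward_step_inv:
  assumes inv: "foba_inv (Test, F, \<beta>, \<delta>) V"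
    and stop: "\<not> linf (G \<beta>) < \<epsilon>" and iF: "i \<notin> F"
    and imax: "\<forall>i'. i' \<notin> F \<longrightarrow> \<bar>G \<beta> $ i'\<bar> \<le> \<bar>G \<beta> $ i\<bar>"
    and \<beta>': "is_restr_min Q (insert i F) \<beta>'"
  shows "\<exists>V'. foba_inv (Back, insert i F, \<beta>', \<delta>(card F + 1 := Q \<beta> - Q \<beta>')) V'
    \<and> potential (Back, insert i F, \<beta>', \<delta>(card F + 1 := Q \<beta> - Q \<beta>')) V'
        \<le> potential (Test, F, \<beta>, \<delta>) V - \<eta> / 2"
    (is "\<exists>V'. foba_inv ?c' V' \<and> potential ?c' V' \<le> _")
proof -
  define k where "k = card F"
  define V' where "V' = V(Suc k := Q \<beta>')"
  from inv have \<beta>: "is_restr_min Q F \<beta>"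
    and rec: "\<forall>j\<in>{1..k}. 2 * \<eta> \<le> \<delta> j \<and> V j + \<delta> j \<le> Q \<beta>bar + real kbar * \<rho>p 1 / \<rho>m s * \<delta> j"
    and chain: "\<forall>j<k. V (Suc j) + \<delta> (Suc j) \<le> V j"
    and cur: "Q \<beta> \<le> V k"
    and range: "\<forall>j\<le>k. Qmin \<le> V j \<and> V j \<le> Q 0"
    unfolding k_def by auto
  have k_lt: "k + kbar < s" unfolding k_def by (rule inv_test_card_lt[OF inv])
  have decrease: "2 * \<eta> \<le> Q \<beta> - Q \<beta>'"
    using forward_decrease[OF \<beta> imax stop \<beta>'] .
  have gap: "Q \<beta> \<le> Q \<beta>bar + real kbar * \<rho>p 1 / \<rho>m s * (Q \<beta> - Q \<beta>')"
    using forward_gap[OF \<beta> _ imax \<beta>'] k_lt unfolding k_def by simp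
  have card': "card (insert i F) = Suc k" unfolding k_def using iF by simp
  have "foba_inv ?c' V'"
    unfolding foba_inv.simps card' k_def[symmetric] Suc_eq_plus1[symmetric]
  proof (intro conjI ballI allI impI)
    fix j assume "j \<in> {1..Suc k}"
    thus "2 * \<eta> \<le> (\<delta>(Suc k := Q \<beta> - Q \<beta>')) j"
      and "V' j + (\<delta>(Suc k := Q \<beta> - Q \<beta>')) j
        \<le> Q \<beta>bar + real kbar * \<rho>p 1 / \<rho>m s * (\<delta>(Suc k := Q \<beta> - Q \<beta>')) j"
      using rec decrease gap by (auto simp: V'_def)
  next
    fix j assume "j < Suc k"
    thus "V' (Suc j) + (\<delta>(Suc k := Q \<beta> - Q \<beta>')) (Suc j) \<le> V' j"
      using chain cur by (cases "j = k") (auto simp: V'_def)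
  next
    fix j assume "j \<le> Suc k"
    thus "Qmin \<le> V' j" "V' j \<le> Q 0"
      using range cur decrease eta_pos Qmin_le by (auto simp: V'_def le_Suc_eq)
  qed (use \<beta>' k_lt in \<open>auto simp: V'_def\<close>)
  moreover have "potential ?c' V' \<le> potential (Test, F, \<beta>, \<delta>) V - \<eta> / 2"
  proof -
    have "Q \<beta>' \<le> Q 0 - 2 * \<eta>" using decrease cur range by auto
    with k_lt weighted_sum_forward_decrease[where V = V and x = "Q \<beta>'", OF k_def[symmetric] card']
    show ?thesis using eta_pos unfolding V'_def k_def by simp
  qed
  ultimately show ?thesis by blast
qed

lemma removal_step_inv:
  assumes inv: "foba_inv (Back, F, \<beta>, \<delta>) V" and jF: "j \<in> F"
    and cheap: "Q (\<beta> - axis j (\<beta> $ j)) - Q \<beta> < \<delta> (card F) / 2"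
    and \<beta>': "is_restr_min Q (F - {j}) \<beta>'"
  shows "\<exists>V'. foba_inv (Back, F - {j}, \<beta>', \<delta>) V'
    \<and> potential (Back, F - {j}, \<beta>', \<delta>) V' \<le> potential (Back, F, \<beta>, \<delta>) V - \<eta> / 2"
proof -
  obtain k where card_F: "card F = Suc k" using jF by (cases "card F") (auto simp: card_eq_0_iff)
  have card': "card (F - {j}) = k" using jF card_F by simp
  define V' where "V' = V(k := Q \<beta>')"
  from inv have \<beta>: "is_restr_min Q F \<beta>" and card: "Suc k + kbar \<le> s"
    and rec: "\<forall>i\<in>{1..Suc k}. 2 * \<eta> \<le> \<delta> i \<and> V i + \<delta> i \<le> Q \<beta>bar + real kbar * \<rho>p 1 / \<rho>m s * \<delta> i"
    and chain: "\<forall>i<Suc k. V (Suc i) + \<delta> (Suc i) \<le> V i"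
    and cur: "Q \<beta> \<le> V (Suc k)"
    and range: "\<forall>i\<le>Suc k. Qmin \<le> V i \<and> V i \<le> Q 0"
    using card_F by auto
  have "supp (\<beta> - axis j (\<beta> $ j)) \<subseteq> F - {j}"
    using \<beta> unfolding supp_remove_coord is_restr_min_def by blast
  hence "Q \<beta>' \<le> Q (\<beta> - axis j (\<beta> $ j))" using \<beta>' unfolding is_restr_min_def by blast
  moreover have "2 * \<eta> \<le> \<delta> (Suc k)" "V (Suc k) + \<delta> (Suc k) \<le> V k" using rec chain by auto
  ultimately have drop: "Q \<beta>' \<le> V k - \<eta>" using cheap cur unfolding card_F by linarith
  have V'_le: "V' i \<le> V i" for i using drop eta_pos by (simp add: V'_def)
  have "foba_inv (Back, F - {j}, \<beta>', \<delta>) V'"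
    unfolding foba_inv.simps card'
  proof (intro conjI ballI allI impI)
    fix i assume "i \<in> {1..k}"
    thus "2 * \<eta> \<le> \<delta> i" "V' i + \<delta> i \<le> Q \<beta>bar + real kbar * \<rho>p 1 / \<rho>m s * \<delta> i"
      using rec V'_le[of i] by force+
  next
    fix i assume "i < k"
    hence "V (Suc i) + \<delta> (Suc i) \<le> V i" "V' i = V i" using chain by (auto simp: V'_def)
    thus "V' (Suc i) + \<delta> (Suc i) \<le> V' i" using V'_le[of "Suc i"] by linarith
  next
    fix i assume "i \<le> k"
    hence "Qmin \<le> V i" "V i \<le> Q 0" using range by auto
    thus "Qmin \<le> V' i" "V' i \<le> Q 0" using V'_le[of i] Qmin_le by (auto simp: V'_def)
  qed (use \<beta>' card in \<open>auto simp: V'_def\<close>)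
  moreover have "potential (Back, F - {j}, \<beta>', \<delta>) V' \<le> potential (Back, F, \<beta>, \<delta>) V - \<eta> / 2"
    using weighted_sum_removal_decrease[where V = V and x = "Q \<beta>'", OF card_F card' _ drop] card range eta_pos
    unfolding V'_def by fastforce
  ultimately show ?thesis by blast
qed

lemma exit_step_inv:
  assumes "foba_inv (Back, F, \<beta>, \<delta>) V" "backward_done Q F \<beta> \<delta>"
  shows "foba_inv (Test, F, \<beta>, \<delta>) V \<and> potential (Test, F, \<beta>, \<delta>) V \<le> potential (Back, F, \<beta>, \<delta>) V - \<eta> / 2"
  using assms by simp

lemma step_inv:
  assumes "foba_inv c V" "foba_gdt_step Q G \<epsilon> c c'"
  shows "\<exists>V'. foba_inv c' V' \<and> potential c' V' \<le> potential c V - \<eta> / 2"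
  using assms(2,1)
proof (cases rule: foba_gdt_step.cases)
  case (forward \<beta> i F \<beta>' \<delta>)
  thus ?thesis using forward_step_inv[of F \<beta> \<delta> V i \<beta>'] assms(1) by simp
next
  case back_exit
  thus ?thesis using exit_step_inv assms(1) unfolding backward_done_def by blast
next
  case (back_remove F j \<beta> \<delta> \<beta>')
  thus ?thesis using removal_step_inv[of F \<beta> \<delta> V j \<beta>'] assms(1) by simp
qed

lemma reachable_foba_inv:
  "(foba_gdt_step Q G \<epsilon>)\<^sup>*\<^sup>* foba_init c \<Longrightarrow> \<exists>V. foba_inv c V"
proof (induction rule: rtranclp_induct)
  case base
  show ?case using foba_inv_init by blast
next
  case (step c c')
  thus ?case using step_inv by blast
qed

lemma foba_inv_progress:
  assumes "foba_inv c V"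
  shows "foba_gdt_stopped G \<epsilon> c \<or> (\<exists>c'. foba_gdt_step Q G \<epsilon> c c')"
proof (cases c)
  case (fields ph F \<beta> \<delta>)
  have \<beta>: "is_restr_min Q F \<beta>" using assms fields by simp
  show ?thesis
  proof (cases ph)
    case Test
    show ?thesis
    proof (cases "linf (G \<beta>) < \<epsilon>")
      case True
      thus ?thesis using fields Test by simp
    next
      case False
      have "- F \<noteq> {}"
      proof
        assume "- F = {}"
        hence "linf (G \<beta>) \<le> 0" using restr_min_grad_zero[OF \<beta>] by (intro linf_le) auto
        thus False using False eps_pos by simp
      qed
      then obtain i where "is_arg_min (\<lambda>i. - \<bar>G \<beta> $ i\<bar>) (\<lambda>i. i \<in> - F) i"
        using ex_is_arg_min_if_finite[of "- F" "\<lambda>i. - \<bar>G \<beta> $ i\<bar>"] by auto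
      hence "i \<notin> F" "\<forall>i'. i' \<notin> F \<longrightarrow> \<bar>G \<beta> $ i'\<bar> \<le> \<bar>G \<beta> $ i\<bar>"
        unfolding is_arg_min_def by auto
      moreover obtain \<beta>' where "is_restr_min Q (insert i F) \<beta>'" using hat_exists by blast
      ultimately show ?thesis using False unfolding fields Test by (blast intro: foba_gdt_step.forward)
    qed
  next
    case Back
    show ?thesis
    proof (cases "backward_done Q F \<beta> \<delta>")
      case True
      hence "foba_gdt_step Q G \<epsilon> (Back, F, \<beta>, \<delta>) (Test, F, \<beta>, \<delta>)"
        unfolding backward_done_def by (intro foba_gdt_step.back_exit) auto
      thus ?thesis unfolding fields Back by blast
    next
      case False
      then obtain i0 where i0: "i0 \<in> F" "Q (\<beta> - axis i0 (\<beta> $ i0)) - Q \<beta> < \<delta> (card F) / 2"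
        unfolding backward_done_def by (auto simp: not_le)
      then obtain j where "is_arg_min (\<lambda>i. Q (\<beta> - axis i (\<beta> $ i))) (\<lambda>i. i \<in> F) j"
        using ex_is_arg_min_if_finite[of F "\<lambda>i. Q (\<beta> - axis i (\<beta> $ i))"] by auto
      hence j: "j \<in> F" "\<forall>i\<in>F. Q (\<beta> - axis j (\<beta> $ j)) \<le> Q (\<beta> - axis i (\<beta> $ i))"
        unfolding is_arg_min_def by (auto simp: not_less)
      moreover have "Q (\<beta> - axis j (\<beta> $ j)) - Q \<beta> < \<delta> (card F) / 2" using j i0 by fastforce
      moreover obtain \<beta>' where "is_restr_min Q (F - {j}) \<beta>'" using hat_exists by blast
      ultimately have "foba_gdt_step Q G \<epsilon> (Back, F, \<beta>, \<delta>) (Back, F - {j}, \<beta>', \<delta>)"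
        by (intro foba_gdt_step.back_remove) auto
      thus ?thesis unfolding fields Back by blast
    qed
  qed
qed

end

theorem theorem2:
  fixes Q :: "real^'n \<Rightarrow> real" and G :: "real^'n \<Rightarrow> real^'n"
    and \<rho>m \<rho>p :: "nat \<Rightarrow> real" and \<beta>bar :: "real^'n" and kbar s :: nat and \<epsilon> :: real
  assumes convex: "convex_on UNIV Q"
    and grad: "\<forall>\<beta>. (Q has_derivative (\<lambda>h. G \<beta> \<bullet> h)) (at \<beta>)"
    and grad_cont: "continuous_on UNIV G"
    and hat_exists: "\<forall>F. \<exists>\<beta>. is_restr_min Q F \<beta>"
    and rsc_s: "rsc Q G \<rho>m \<rho>p s" and rsc_1: "rsc Q G \<rho>m \<rho>p 1"
    and betabar_opt: "\<forall>\<beta>. norm0 \<beta> \<le> kbar \<longrightarrow> Q \<beta>bar \<le> Q \<beta>"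
    and kbar_def: "kbar = norm0 \<beta>bar"
    and s_pos: "s > 0"
    and s_cond: "real s - real kbar > (real kbar + 1) *
        ((sqrt (\<rho>p s / \<rho>m s) + 1) * (2 * \<rho>p 1 / \<rho>m s))\<^sup>2"
    and eps_cond: "\<epsilon> > 2 * sqrt 2 * \<rho>p 1 / \<rho>m s * linf (G \<beta>bar)"
  shows "(\<nexists>f. f 0 = foba_init \<and> (\<forall>n. foba_gdt_step Q G \<epsilon> (f n) (f (Suc n))))
       \<and> (\<forall>c. (foba_gdt_step Q G \<epsilon>)\<^sup>*\<^sup>* foba_init c \<longrightarrow>
              foba_gdt_stopped G \<epsilon> c \<or> (\<exists>c'. foba_gdt_step Q G \<epsilon> c c'))
       \<and> (\<forall>c. (foba_gdt_step Q G \<epsilon>)\<^sup>*\<^sup>* foba_init c \<and> foba_gdt_stopped G \<epsilon> c \<longrightarrow>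
              card (conf_support c) \<le> s - kbar)"
proof -
  interpret foba_gdt_setting Q G \<rho>m \<rho>p s \<beta>bar kbar \<epsilon>
    using rsc_s rsc_1 s_pos hat_exists betabar_opt kbar_def s_cond eps_cond by unfold_locales
  have "\<nexists>f. f 0 = foba_init \<and> (\<forall>n. foba_gdt_step Q G \<epsilon> (f n) (f (Suc n)))"
    using no_infinite_chain_if_potential_decreases[where I = foba_inv and \<phi> = potential and d = "\<eta> / 2",
        OF foba_inv_init step_inv _ potential_nonneg] eta_pos
    by simp
  moreover have "card (conf_support c) \<le> s - kbar"
    if "foba_inv c V" "foba_gdt_stopped G \<epsilon> c" for c V
    using that inv_test_card_lt by (cases c) fastforce
  ultimately show ?thesis
    using reachable_foba_inv foba_inv_progress by (metis (no_types, lifting))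
qed

end
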